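(* Let $G=B(m;R,S,T)$ be a connected bicirculant of degree $d=|R|+|S|\ge 4$ with $|R|,|T|\ge 3$. Let $a\in R$ and $b\in T$ with $a,b\ne m/2$, and let $H$ be the spanning subgraph of $G$ obtained by removing all edges $u_iu_{i\pm a}$ and $v_iv_{i\pm b}$, i.e. $H=B(m;R\setminus\{a,-a\},S,T\setminus\{b,-b\})$. If every connected component of $H$ contains a hamilton cycle having at least two outer edges, then $G$ is hamiltonian.
   Context: For an integer $m\ge 1$ and subsets $R,S,T\subseteq\mathbb{Z}_m$ with $R=-R$, $T=-T$, $0\notin R\cup T$, $0\in S$ and $|R|=|T|$, the bicirculant $B(m;R,S,T)$ is the graph with vertex set $\{u_0,\dots,u_{m-1}\}\cup\{v_0,\dots,v_{m-1}\}$ and edge set $\{u_iu_{i+j}: i\in\mathbb{Z}_m, j\in R\}\cup\{v_iv_{i+j}: i\in\mathbb{Z}_m, j\in T\}\cup\{u_iv_{i+j}: i\in\mathbb{Z}_m, j\in S\}$ (indices mod $m$). Outer edges are those of the form $u_iu_{i+j}$ ($j\in R$). *)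

theory Defs
  imports Main
begin

text \<open>Vertices of a bicirculant B(m;R,S,T):
u_i = Inl i and v_i = Inr i for i < m.  Elements of Z_m are represented by
naturals below m; negation in Z_m is j maps to (m - j) mod m.\<close>

definition zneg :: "nat \<Rightarrow> nat \<Rightarrow> nat" where
  "zneg m j = (m - j) mod m"

definition is_bicirculant_data :: "nat \<Rightarrow> nat set \<Rightarrow> nat set \<Rightarrow> nat set \<Rightarrow> bool" where
  "is_bicirculant_data m R S T \<longleftrightarrow>
     m \<ge> 1 \<and> R \<subseteq> {..<m} \<and> S \<subseteq> {..<m} \<and> T \<subseteq> {..<m} \<and>
     zneg m ` R = R \<and> zneg m ` T = T \<and> 0 \<notin> R \<and> 0 \<notin> T \<and> 0 \<in> S \<and>
     card R = card T"

definition bic_verts :: "nat \<Rightarrow> (nat + nat) set" where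
  "bic_verts m = Inl ` {..<m} \<union> Inr ` {..<m}"

definition bic_edges :: "nat \<Rightarrow> nat set \<Rightarrow> nat set \<Rightarrow> nat set \<Rightarrow> (nat + nat) set set" where
  "bic_edges m R S T =
     {{Inl i, Inl ((i + j) mod m)} | i j. i < m \<and> j \<in> R} \<union>
     {{Inr i, Inr ((i + j) mod m)} | i j. i < m \<and> j \<in> T} \<union>
     {{Inl i, Inr ((i + j) mod m)} | i j. i < m \<and> j \<in> S}"

definition adj :: "'a set set \<Rightarrow> 'a \<Rightarrow> 'a \<Rightarrow> bool" where
  "adj E x y \<longleftrightarrow> {x, y} \<in> E"

definition graph_connected :: "'a set \<Rightarrow> 'a set set \<Rightarrow> bool" where
  "graph_connected V E \<longleftrightarrow> V \<noteq> {} \<and> (\<forall>x\<in>V. \<forall>y\<in>V. (adj E)\<^sup>*\<^sup>* x y)"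

definition component :: "'a set \<Rightarrow> 'a set set \<Rightarrow> 'a \<Rightarrow> 'a set" where
  "component V E x = {y \<in> V. (adj E)\<^sup>*\<^sup>* x y}"

definition is_cycle :: "'a set set \<Rightarrow> 'a list \<Rightarrow> bool" where
  "is_cycle E vs \<longleftrightarrow> length vs \<ge> 3 \<and> distinct vs \<and>
     (\<forall>i < length vs. {vs ! i, vs ! (Suc i mod length vs)} \<in> E)"

definition cycle_edges :: "'a list \<Rightarrow> 'a set set" where
  "cycle_edges vs = {{vs ! i, vs ! (Suc i mod length vs)} | i. i < length vs}"

definition hamiltonian :: "'a set \<Rightarrow> 'a set set \<Rightarrow> bool" where
  "hamiltonian V E \<longleftrightarrow> (\<exists>vs. is_cycle E vs \<and> set vs = V)"

definition outer_edge :: "(nat + nat) set \<Rightarrow> bool" where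
  "outer_edge e \<longleftrightarrow> (\<exists>i j. e = {Inl i, Inl j})"

end

theory Submission
  imports Defs
begin

text \<open>
  Rotation by c (i \<mapsto> i + c on both rings) is an automorphism of G and of H, so the
  components of H are the translates K p of the component K 0 of u 0.  Since G is connected
  and G - H consists of a-jumps and b-jumps, the components are exactly the K (i b + j a) with
  0 \<le> i < l and 0 \<le> j < k (k = a_order, l = b_order), and these are pairwise distinct.  A component
  contains u p iff it contains v p, so a Hamilton cycle Z of K 0 has as many inner edges
  v v as outer edges u u, hence at least two of each.  Gluing the k translates of Z by multiples
  of a, each to the next through a-jumps at the translates of two outer edges (used alternately),
  gives a cycle Y through all K (j a) that keeps the inner edges of Z.  Gluing the l translates
  of Y by multiples of b in the same way through b-jumps at two inner edges gives a Hamilton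
  cycle of G.
\<close>

section \<open>Cycles given as vertex lists\<close>

fun path_edges :: "'a list \<Rightarrow> 'a set set" where
  "path_edges (x # y # xs) = insert {x, y} (path_edges (y # xs))"
| "path_edges _ = {}"

lemma path_edges_conv_nth: "path_edges xs = (\<lambda>k. {xs ! k, xs ! Suc k}) ` {..<length xs - 1}"
  by (induction xs rule: path_edges.induct)
    (simp_all add: lessThan_Suc_eq_insert_0 image_image del: lessThan_Suc)

lemma path_edges_Cons: "xs \<noteq> [] \<Longrightarrow> path_edges (x # xs) = insert {x, hd xs} (path_edges xs)"
  by (cases xs) auto

lemma path_edges_append:
  "path_edges (xs @ ys) =
     path_edges xs \<union> path_edges ys \<union> (if xs \<noteq> [] \<and> ys \<noteq> [] then {{last xs, hd ys}} else {})"
proof (induction xs rule: path_edges.induct)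
  case ("2_2" x)
  then show ?case by (cases ys) auto
qed auto

lemma path_edges_rev: "path_edges (rev xs) = path_edges xs"
proof (induction xs)
  case (Cons x xs)
  then show ?case
    by (cases "xs = []") (simp_all add: path_edges_append path_edges_Cons last_rev insert_commute)
qed simp

lemma is_cycle_iff: "is_cycle E vs \<longleftrightarrow> 3 \<le> length vs \<and> distinct vs \<and> cycle_edges vs \<subseteq> E"
  unfolding is_cycle_def cycle_edges_def by blast

lemma cycle_edges_eq_image:
  "cycle_edges vs = (\<lambda>i. {vs ! i, vs ! (Suc i mod length vs)}) ` {..<length vs}"
  unfolding cycle_edges_def by blast

lemma cycle_edges_conv_path_edges:
  assumes "vs \<noteq> []"
  shows "cycle_edges vs = insert {last vs, hd vs} (path_edges vs)"
proof -
  obtain n where n: "length vs = Suc n"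
    using assms by (cases vs) auto
  have "cycle_edges vs = (\<lambda>i. {vs ! i, vs ! (Suc i mod Suc n)}) ` {..<Suc n}"
    unfolding cycle_edges_def n by blast
  also have "\<dots> = insert {vs ! n, vs ! 0} ((\<lambda>i. {vs ! i, vs ! Suc i}) ` {..<n})"
    by (auto simp: lessThan_Suc image_iff)
  finally show ?thesis
    using n assms by (simp add: path_edges_conv_nth last_conv_nth hd_conv_nth)
qed

lemma cycle_edges_rotate1: "cycle_edges (rotate1 vs) = cycle_edges vs"
proof (cases vs)
  case (Cons x xs)
  then show ?thesis
    by (cases "xs = []")
      (simp_all add: cycle_edges_conv_path_edges path_edges_append path_edges_Cons insert_commute)
qed simp

lemma cycle_edges_rotate: "cycle_edges (rotate n vs) = cycle_edges vs"
  by (induction n) (simp_all add: cycle_edges_rotate1)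

lemma cycle_edges_rev: "cycle_edges (rev vs) = cycle_edges vs"
  by (cases "vs = []")
    (simp_all add: cycle_edges_conv_path_edges path_edges_rev hd_rev last_rev insert_commute)

lemma cycle_edge_subset: "e \<in> cycle_edges vs \<Longrightarrow> e \<subseteq> set vs"
  unfolding cycle_edges_def by (auto intro!: nth_mem mod_less_divisor)

lemma cycle_edge_doubleton: "e \<in> cycle_edges vs \<Longrightarrow> \<exists>x y. e = {x, y}"
  unfolding cycle_edges_def by auto

lemma cycle_edge_at_ends:
  assumes "e \<in> cycle_edges vs"
  shows "\<exists>n. e = {last (rotate n vs), hd (rotate n vs)}"
proof -
  obtain i where i: "i < length vs" "e = {vs ! i, vs ! (Suc i mod length vs)}"
    using assms unfolding cycle_edges_def by blast
  then have "vs \<noteq> []"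
    by auto
  have "last (rotate (Suc i) vs) = rotate (Suc i) vs ! (length vs - 1)"
    using \<open>vs \<noteq> []\<close> by (simp add: last_conv_nth del: rotate_Suc)
  also have "\<dots> = vs ! ((Suc i + (length vs - 1)) mod length vs)"
    using i(1) by (intro nth_rotate) simp
  also have "Suc i + (length vs - 1) = length vs + i"
    using i(1) by simp
  also have "(length vs + i) mod length vs = i"
    using i(1) by simp
  finally have "last (rotate (Suc i) vs) = vs ! i" .
  moreover have "hd (rotate (Suc i) vs) = vs ! (Suc i mod length vs)"
    using \<open>vs \<noteq> []\<close> nth_rotate[of 0 vs "Suc i"] by (simp add: hd_conv_nth del: rotate_Suc)
  ultimately show ?thesis
    using i(2) by metis
qed

lemma cycle_reorient:
  assumes "is_cycle E vs" "{x, y} \<in> cycle_edges vs"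
  obtains ws where "is_cycle E ws" "set ws = set vs" "cycle_edges ws = cycle_edges vs"
    "hd ws = y" "last ws = x"
proof -
  obtain n where n: "{x, y} = {last (rotate n vs), hd (rotate n vs)}"
    using cycle_edge_at_ends assms(2) by blast
  have rot: "is_cycle E (rotate n vs)" "cycle_edges (rotate n vs) = cycle_edges vs"
    using assms(1) by (simp_all add: is_cycle_iff cycle_edges_rotate)
  then have rev: "is_cycle E (rev (rotate n vs))" "cycle_edges (rev (rotate n vs)) = cycle_edges vs"
    by (simp_all add: is_cycle_iff cycle_edges_rev)
  have "rotate n vs \<noteq> []"
    using assms(1) by (auto simp: is_cycle_iff)
  moreover have "x = last (rotate n vs) \<and> y = hd (rotate n vs) \<or>
      x = hd (rotate n vs) \<and> y = last (rotate n vs)"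
    using n by (auto simp: doubleton_eq_iff)
  ultimately consider "x = last (rotate n vs)" "y = hd (rotate n vs)"
    | "x = last (rev (rotate n vs))" "y = hd (rev (rotate n vs))"
    by (auto simp: hd_rev last_rev)
  then show ?thesis
  proof cases
    case 1
    then show ?thesis using that[of "rotate n vs"] rot by simp
  next
    case 2
    then show ?thesis using that[of "rev (rotate n vs)"] rev by simp
  qed
qed

text \<open>Orient Y from y to x and X from x' to y'; then Y @ X closes up through {x, x'} and {y, y'}.\<close>

lemma is_cycle_merge:
  assumes Y: "is_cycle E Y" and X: "is_cycle E X" and disj: "set Y \<inter> set X = {}"
    and xy: "{x, y} \<in> cycle_edges Y" and xy': "{x', y'} \<in> cycle_edges X"
    and "{x, x'} \<in> E" and "{y, y'} \<in> E"
  obtains Z where "is_cycle E Z" "set Z = set Y \<union> set X"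
    "(cycle_edges Y - {{x, y}}) \<union> (cycle_edges X - {{x', y'}}) \<subseteq> cycle_edges Z"
proof -
  obtain Y1 where Y1: "is_cycle E Y1" "set Y1 = set Y" "cycle_edges Y1 = cycle_edges Y"
    "hd Y1 = y" "last Y1 = x"
    using cycle_reorient[OF Y xy] .
  have "{y', x'} \<in> cycle_edges X"
    using xy' by (simp add: insert_commute)
  then obtain X1 where X1: "is_cycle E X1" "set X1 = set X" "cycle_edges X1 = cycle_edges X"
    "hd X1 = x'" "last X1 = y'"
    using cycle_reorient[OF X] by blast
  have ne: "Y1 \<noteq> []" "X1 \<noteq> []"
    using Y1(1) X1(1) by (auto simp: is_cycle_iff)
  have "cycle_edges Y = insert {x, y} (path_edges Y1)"
    "cycle_edges X = insert {x', y'} (path_edges X1)"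
    using ne Y1 X1 cycle_edges_conv_path_edges by (metis insert_commute)+
  moreover have "cycle_edges (Y1 @ X1) =
      insert {y', y} (insert {x, x'} (path_edges Y1 \<union> path_edges X1))"
    using ne Y1 X1 by (simp add: cycle_edges_conv_path_edges path_edges_append)
  moreover have "3 \<le> length (Y1 @ X1)" "distinct (Y1 @ X1)"
    using Y1 X1 disj by (auto simp: is_cycle_iff)
  ultimately show ?thesis
    using that[of "Y1 @ X1"] Y1 X1 Y X assms(6,7) by (auto simp: is_cycle_iff insert_commute)
qed

text \<open>
  The cycles are glued in turn, X (Suc j) trading the edge P j for Q j; the last hypothesis
  ensures that P (Suc j) has not already been traded away as Q j.
\<close>

lemma is_cycle_merge_chain:
  assumes "\<And>j. j \<le> n \<Longrightarrow> is_cycle E (X j)"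
    and "\<And>j j'. j \<le> n \<Longrightarrow> j' \<le> n \<Longrightarrow> j \<noteq> j' \<Longrightarrow> set (X j) \<inter> set (X j') = {}"
    and "\<And>j. j < n \<Longrightarrow> P j \<in> cycle_edges (X j) \<and> Q j \<in> cycle_edges (X (Suc j))"
    and "\<And>j. j < n \<Longrightarrow> \<exists>x y x' y'. P j = {x, y} \<and> Q j = {x', y'} \<and> {x, x'} \<in> E \<and> {y, y'} \<in> E"
    and "\<And>j. Suc j < n \<Longrightarrow> P (Suc j) \<noteq> Q j"
  shows "\<exists>Y. is_cycle E Y \<and> set Y = (\<Union>j\<le>n. set (X j)) \<and>
     (\<Union>j\<le>n. cycle_edges (X j)) - (P ` {..<n} \<union> Q ` {..<n}) \<subseteq> cycle_edges Y"
  using assms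
proof (induction n)
  case 0
  then show ?case by (intro exI[of _ "X 0"]) auto
next
  case (Suc n)
  have "\<exists>Y. is_cycle E Y \<and> set Y = (\<Union>j\<le>n. set (X j)) \<and>
     (\<Union>j\<le>n. cycle_edges (X j)) - (P ` {..<n} \<union> Q ` {..<n}) \<subseteq> cycle_edges Y"
    using Suc.prems by (intro Suc.IH) auto
  then obtain Y where Y: "is_cycle E Y" "set Y = (\<Union>j\<le>n. set (X j))"
    "(\<Union>j\<le>n. cycle_edges (X j)) - (P ` {..<n} \<union> Q ` {..<n}) \<subseteq> cycle_edges Y"
    by blast
  have PQ: "P j \<subseteq> set (X j)" "Q j \<subseteq> set (X (Suc j))" "P j \<noteq> {}" if "j \<le> n" for j
    using Suc.prems(3)[of j] that cycle_edge_subset cycle_edge_doubleton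
    by (force simp: less_Suc_eq_le)+
  have "P n \<notin> P ` {..<n} \<union> Q ` {..<n}"
  proof
    assume "P n \<in> P ` {..<n} \<union> Q ` {..<n}"
    then obtain j where j: "j < n" "P n = P j \<or> P n = Q j"
      by auto
    obtain z where z: "z \<in> P n"
      using PQ(3)[of n] by auto
    then have "z \<in> set (X n)"
      using PQ(1)[of n] by auto
    moreover have "z \<in> set (X j) \<or> z \<in> set (X (Suc j)) \<and> Suc j \<noteq> n"
      using j z PQ[of j] Suc.prems(5)[of j] by auto
    ultimately show False
      using j Suc.prems(2)[of j n] Suc.prems(2)[of "Suc j" n] by auto
  qed
  then have "P n \<in> cycle_edges Y"
    using Y(3) Suc.prems(3)[of n] by blast
  moreover obtain x y x' y' where l: "P n = {x, y}" "Q n = {x', y'}" "{x, x'} \<in> E" "{y, y'} \<in> E"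
    using Suc.prems(4)[of n] by auto
  ultimately have edges: "{x, y} \<in> cycle_edges Y" "{x', y'} \<in> cycle_edges (X (Suc n))"
    using Suc.prems(3)[of n] by auto
  have "set (X j) \<inter> set (X (Suc n)) = {}" if "j \<le> n" for j
    using Suc.prems(2)[of j "Suc n"] that by simp
  then have "set Y \<inter> set (X (Suc n)) = {}"
    using Y(2) by blast
  then obtain Z where Z: "is_cycle E Z" "set Z = set Y \<union> set (X (Suc n))"
    "(cycle_edges Y - {{x, y}}) \<union> (cycle_edges (X (Suc n)) - {{x', y'}}) \<subseteq> cycle_edges Z"
    using is_cycle_merge[OF Y(1) Suc.prems(1)[of "Suc n"] _ edges l(3,4)] by auto
  show ?case
  proof (intro exI conjI)
    show "is_cycle E Z" by fact
    show "set Z = (\<Union>j\<le>Suc n. set (X j))"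
      using Z(2) Y(2) by (auto simp: atMost_Suc)
    show "(\<Union>j\<le>Suc n. cycle_edges (X j)) - (P ` {..<Suc n} \<union> Q ` {..<Suc n}) \<subseteq> cycle_edges Z"
      using Z(3) Y(3) l by (auto simp: atMost_Suc lessThan_Suc)
  qed
qed

lemma cycle_edges_map: "cycle_edges (map f vs) = (\<lambda>e. f ` e) ` cycle_edges vs"
proof -
  have "cycle_edges (map f vs) = (\<lambda>i. f ` {vs ! i, vs ! (Suc i mod length vs)}) ` {..<length vs}"
    unfolding cycle_edges_eq_image length_map
  proof (rule image_cong[OF refl])
    fix i assume "i \<in> {..<length vs}"
    then have "0 < length vs" by auto
    then show "{map f vs ! i, map f vs ! (Suc i mod length vs)} =
        f ` {vs ! i, vs ! (Suc i mod length vs)}"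
      using \<open>i \<in> {..<length vs}\<close> by simp
  qed
  then show ?thesis
    by (simp add: cycle_edges_eq_image image_image)
qed

lemma is_cycle_map:
  "is_cycle E vs \<Longrightarrow> inj_on f (set vs) \<Longrightarrow> (\<And>e. e \<in> E \<Longrightarrow> f ` e \<in> E') \<Longrightarrow> is_cycle E' (map f vs)"
  unfolding is_cycle_iff cycle_edges_map by (auto simp: distinct_map)

lemma is_cycle_mono: "is_cycle E vs \<Longrightarrow> E \<subseteq> E' \<Longrightarrow> is_cycle E' vs"
  unfolding is_cycle_iff by auto

section \<open>Connected components\<close>

lemma adj_sym: "adj E x y \<Longrightarrow> adj E y x"
  unfolding adj_def by (simp add: insert_commute)

lemma reachable_sym: "(adj E)\<^sup>*\<^sup>* x y \<Longrightarrow> (adj E)\<^sup>*\<^sup>* y x"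
proof (induction rule: rtranclp_induct)
  case (step y z)
  then show ?case
    using adj_sym converse_rtranclp_into_rtranclp by metis
qed simp

lemma component_subset: "component V E x \<subseteq> V"
  unfolding component_def by auto

lemma component_self: "x \<in> V \<Longrightarrow> x \<in> component V E x"
  unfolding component_def by auto

lemma component_eq:
  assumes "y \<in> component V E x"
  shows "component V E y = component V E x"
proof -
  have "(adj E)\<^sup>*\<^sup>* x y" "(adj E)\<^sup>*\<^sup>* y x"
    using assms reachable_sym unfolding component_def by auto
  then show ?thesis
    unfolding component_def using rtranclp_trans by metis
qed

lemma component_eq_if_mem:
  "z \<in> component V E x \<Longrightarrow> z \<in> component V E y \<Longrightarrow> component V E x = component V E y"
  using component_eq by metis

lemma component_step:
  "y \<in> component V E x \<Longrightarrow> {y, z} \<in> E \<Longrightarrow> z \<in> V \<Longrightarrow> z \<in> component V E x"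
  unfolding component_def adj_def by (auto intro: rtranclp.rtrancl_into_rtrancl)

lemma reachable_image:
  assumes "(adj E)\<^sup>*\<^sup>* x y" and "\<And>e. e \<in> E \<Longrightarrow> f ` e \<in> E"
  shows "(adj E)\<^sup>*\<^sup>* (f x) (f y)"
  using assms(1)
proof (induction rule: rtranclp_induct)
  case (step y z)
  then have "adj E (f y) (f z)"
    using assms(2)[of "{y, z}"] by (simp add: adj_def)
  with step.IH show ?case
    by (rule rtranclp.rtrancl_into_rtrancl)
qed simp

lemma component_image:
  assumes "\<And>x. x \<in> V \<Longrightarrow> f x \<in> V" and "\<And>e. e \<in> E \<Longrightarrow> f ` e \<in> E"
  shows "f ` component V E x \<subseteq> component V E (f x)"
proof
  fix y assume "y \<in> f ` component V E x"
  then obtain z where "y = f z" "z \<in> V" "(adj E)\<^sup>*\<^sup>* x z"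
    unfolding component_def by blast
  then show "y \<in> component V E (f x)"
    unfolding component_def using assms reachable_image[of E x z f] by simp
qed

section \<open>Outer and inner edges of a cycle\<close>

definition inner_edge :: "(nat + nat) set \<Rightarrow> bool" where
  "inner_edge e \<longleftrightarrow> (\<exists>i j. e = {Inr i, Inr j})"

lemma outer_edge_doubleton: "outer_edge {x, y} \<longleftrightarrow> isl x \<and> isl y"
  by (cases x; cases y) (auto simp: outer_edge_def doubleton_eq_iff)

lemma inner_edge_doubleton: "inner_edge {x, y} \<longleftrightarrow> \<not> isl x \<and> \<not> isl y"
  by (cases x; cases y) (auto simp: inner_edge_def doubleton_eq_iff)

lemma inj_on_cycle_edge:
  assumes "distinct vs" "3 \<le> length vs"
  shows "inj_on (\<lambda>k. {vs ! k, vs ! (Suc k mod length vs)}) {..<length vs}"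
proof (rule inj_onI)
  fix k k'
  assume k: "k \<in> {..<length vs}" "k' \<in> {..<length vs}"
    and eq: "{vs ! k, vs ! (Suc k mod length vs)} = {vs ! k', vs ! (Suc k' mod length vs)}"
  have idx: "i = j" if "vs ! i = vs ! j" "i < length vs" "j < length vs" for i j
    using that assms(1) nth_eq_iff_index_eq by blast
  have L: "0 < length vs"
    using assms(2) by linarith
  from eq consider "vs ! k = vs ! k'"
    | "vs ! k = vs ! (Suc k' mod length vs)" "vs ! (Suc k mod length vs) = vs ! k'"
    by (auto simp: doubleton_eq_iff)
  then show "k = k'"
  proof cases
    case 1
    then show ?thesis using idx k by simp
  next
    case 2
    then have "k = Suc k' mod length vs" "k' = Suc k mod length vs"
      using idx k L by simp_all
    then have "Suc (Suc k) mod length vs = k mod length vs"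
      using k by (simp add: mod_Suc_eq)
    then have "length vs dvd 2"
      by (simp add: mod_eq_dvd_iff_nat)
    then show ?thesis
      using assms(2) by (auto dest: dvd_imp_le)
  qed
qed

lemma sum_nth_eq_sum_set:
  "distinct xs \<Longrightarrow> (\<Sum>k<length xs. f (xs ! k)) = (\<Sum>x\<in>set xs. f x)"
  by (simp add: sum.distinct_set_conv_list sum_list_sum_nth atLeast0LessThan)

text \<open>
  Every vertex lies on two cycle edges, so summing the sign (+1 on Inl, -1 on Inr) over both ends
  of all cycle edges gives 2 (outer - inner) on the one hand and 2 (\<bar>Inl\<bar> - \<bar>Inr\<bar>) = 0 on
  the other.
\<close>

lemma card_outer_edges_eq_card_inner_edges:
  assumes cycle: "is_cycle E vs"
    and balanced: "card {x \<in> set vs. isl x} = card {x \<in> set vs. \<not> isl x}"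
  shows "card {e \<in> cycle_edges vs. outer_edge e} = card {e \<in> cycle_edges vs. inner_edge e}"
proof -
  define L where "L = length vs"
  define edge where "edge = (\<lambda>k. {vs ! k, vs ! (Suc k mod L)})"
  define LL where "LL = {k \<in> {..<L}. isl (vs ! k) \<and> isl (vs ! (Suc k mod L))}"
  define RR where "RR = {k \<in> {..<L}. \<not> isl (vs ! k) \<and> \<not> isl (vs ! (Suc k mod L))}"
  define sg :: "nat + nat \<Rightarrow> int" where "sg x = (if isl x then 1 else -1)" for x
  have dist: "distinct vs" "distinct (rotate1 vs)" "3 \<le> L"
    using cycle by (simp_all add: is_cycle_iff L_def)
  have sub: "LL \<subseteq> {..<L}" "RR \<subseteq> {..<L}"
    by (auto simp: LL_def RR_def)
  have "(\<Sum>x\<in>set vs. sg x) = int (card {x \<in> set vs. isl x}) - int (card {x \<in> set vs. \<not> isl x})"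
    by (simp add: sg_def sum.If_cases Int_def sum_negf conj_commute)
  then have sum_zero: "(\<Sum>x\<in>set vs. sg x) = 0"
    using balanced by simp
  have "(\<Sum>k<L. sg (vs ! k)) = 0"
    using sum_nth_eq_sum_set[OF dist(1), of sg] sum_zero by (simp add: L_def)
  moreover have "(\<Sum>k<L. sg (vs ! (Suc k mod L))) = 0"
    using sum_nth_eq_sum_set[OF dist(2), of sg] sum_zero by (simp add: L_def nth_rotate1)
  ultimately have "(\<Sum>k<L. sg (vs ! k) + sg (vs ! (Suc k mod L))) = 0"
    by (simp add: sum.distrib)
  moreover have "sg (vs ! k) + sg (vs ! (Suc k mod L)) =
      2 * of_bool (k \<in> LL) - 2 * of_bool (k \<in> RR)" if "k < L" for k
    using that by (simp add: sg_def LL_def RR_def)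
  ultimately have "(\<Sum>k<L. 2 * of_bool (k \<in> LL) - 2 * of_bool (k \<in> RR) :: int) = 0"
    by simp
  then have "card LL = card RR"
    using sub
    by (simp add: sum_subtractf sum_distrib_left[symmetric] sum_of_bool_eq Int_absorb1 Int_absorb2)
  moreover have "{e \<in> cycle_edges vs. outer_edge e} = edge ` LL"
    unfolding cycle_edges_eq_image LL_def edge_def L_def by (auto simp: outer_edge_doubleton)
  moreover have "{e \<in> cycle_edges vs. inner_edge e} = edge ` RR"
    unfolding cycle_edges_eq_image RR_def edge_def L_def by (auto simp: inner_edge_doubleton)
  moreover have "inj_on edge {..<L}"
    using inj_on_cycle_edge[OF dist(1)] dist(3) by (simp add: edge_def L_def)
  ultimately show ?thesis
    using sub by (simp add: card_image inj_on_subset)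
qed

lemma card_ge_2_obtain:
  assumes "2 \<le> card A"
  obtains x y where "x \<in> A" "y \<in> A" "x \<noteq> y"
  using assms by (metis card_le_Suc_iff insert_iff numeral_2_eq_2)

lemma outer_edge_not_inner_edge: "outer_edge e \<Longrightarrow> \<not> inner_edge e"
  by (auto simp: outer_edge_def inner_edge_def doubleton_eq_iff)

section \<open>Shifts of a bicirculant\<close>

lemma bic_edges_mono: "R' \<subseteq> R \<Longrightarrow> T' \<subseteq> T \<Longrightarrow> bic_edges m R' S T' \<subseteq> bic_edges m R S T"
  unfolding bic_edges_def by blast

text \<open>Vertices are indexed by integers read modulo m: u p is the vertex u with index p mod m.\<close>

definition res :: "nat \<Rightarrow> int \<Rightarrow> nat" where
  "res m p = nat (p mod int m)"

definition shift :: "nat \<Rightarrow> int \<Rightarrow> nat + nat \<Rightarrow> nat + nat" where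
  "shift m c = map_sum (\<lambda>i. res m (int i + c)) (\<lambda>i. res m (int i + c))"

lemma res_less: "0 < m \<Longrightarrow> res m p < m"
  by (simp add: res_def nat_less_iff)

lemma res_of_nat: "i < m \<Longrightarrow> res m (int i) = i"
  by (simp add: res_def)

lemma res_of_nat_add: "res m (int i + int j) = (i + j) mod m"
  by (simp add: res_def nat_mod_as_int flip: of_nat_add)

lemma res_add_res: "0 < m \<Longrightarrow> res m (int (res m p) + q) = res m (p + q)"
  by (simp add: res_def mod_add_left_eq)

lemma res_add_modulus: "res m (p + int m) = res m p"
  by (simp add: res_def)

locale bicirculant =
  fixes m :: nat
  assumes m_pos: "0 < m"
begin

abbreviation u :: "int \<Rightarrow> nat + nat" where "u p \<equiv> Inl (res m p)"
abbreviation v :: "int \<Rightarrow> nat + nat" where "v p \<equiv> Inr (res m p)"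

lemma shift_u [simp]: "shift m c (u p) = u (p + c)"
  by (simp add: shift_def res_add_res m_pos)

lemma shift_v [simp]: "shift m c (v p) = v (p + c)"
  by (simp add: shift_def res_add_res m_pos)

lemma bic_verts_eq: "bic_verts m = range u \<union> range v"
proof -
  have "{..<m} = range (res m)"
  proof (intro subset_antisym subsetI)
    fix i assume "i \<in> {..<m}"
    then have "i = res m (int i)"
      by (simp add: res_of_nat)
    then show "i \<in> range (res m)"
      by (rule range_eqI)
  qed (auto simp: res_less m_pos)
  then show ?thesis
    by (auto simp: bic_verts_def)
qed

lemma bic_verts_cases:
  assumes "x \<in> bic_verts m"
  obtains p where "x = u p" | p where "x = v p"
  using assms by (auto simp: bic_verts_eq)

lemma shift_shift: "x \<in> bic_verts m \<Longrightarrow> shift m c (shift m d x) = shift m (d + c) x"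
  by (auto simp: bic_verts_eq add.assoc)

lemma shift_0: "x \<in> bic_verts m \<Longrightarrow> shift m 0 x = x"
  by (auto simp: bic_verts_eq)

lemma shift_in_verts: "x \<in> bic_verts m \<Longrightarrow> shift m c x \<in> bic_verts m"
  by (auto simp: bic_verts_eq)

lemma shift_inverse: "x \<in> bic_verts m \<Longrightarrow> shift m (- c) (shift m c x) = x"
  by (simp add: shift_shift shift_0)

lemma inj_on_shift: "inj_on (shift m c) (bic_verts m)"
  by (metis inj_onI shift_inverse)

lemma bic_edge_kind_iff:
  "(\<exists>i j. e = {f i, g ((i + j) mod m)} \<and> i < m \<and> j \<in> J) \<longleftrightarrow>
     (\<exists>p. \<exists>j\<in>J. e = {f (res m p), g (res m (p + int j))})"
proof
  assume "\<exists>i j. e = {f i, g ((i + j) mod m)} \<and> i < m \<and> j \<in> J"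
  then obtain i j where "e = {f i, g ((i + j) mod m)}" "i < m" "j \<in> J"
    by blast
  then show "\<exists>p. \<exists>j\<in>J. e = {f (res m p), g (res m (p + int j))}"
    by (intro exI[of _ "int i"] bexI[of _ j]) (simp_all add: res_of_nat res_of_nat_add)
next
  assume "\<exists>p. \<exists>j\<in>J. e = {f (res m p), g (res m (p + int j))}"
  then obtain p j where "e = {f (res m p), g (res m (p + int j))}" "j \<in> J"
    by blast
  moreover have "res m (p + int j) = (res m p + j) mod m"
    using res_add_res[OF m_pos, of p "int j"] by (simp add: res_of_nat_add)
  ultimately show "\<exists>i j. e = {f i, g ((i + j) mod m)} \<and> i < m \<and> j \<in> J"
    using res_less[OF m_pos] by (intro exI[of _ "res m p"] exI[of _ j]) simp
qed

lemma bic_edges_iff: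
  "e \<in> bic_edges m R S T \<longleftrightarrow>
     (\<exists>p. \<exists>j\<in>R. e = {u p, u (p + int j)}) \<or>
     (\<exists>p. \<exists>j\<in>T. e = {v p, v (p + int j)}) \<or>
     (\<exists>p. \<exists>j\<in>S. e = {u p, v (p + int j)})"
  unfolding bic_edges_def Un_iff mem_Collect_eq bic_edge_kind_iff by blast

lemma u_edge: "j \<in> R \<Longrightarrow> {u p, u (p + int j)} \<in> bic_edges m R S T"
  unfolding bic_edges_iff by blast

lemma v_edge: "j \<in> T \<Longrightarrow> {v p, v (p + int j)} \<in> bic_edges m R S T"
  unfolding bic_edges_iff by blast

lemma uv_edge: "j \<in> S \<Longrightarrow> {u p, v (p + int j)} \<in> bic_edges m R S T"
  unfolding bic_edges_iff by blast

lemma shift_edge: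
  assumes "e \<in> bic_edges m R S T"
  shows "shift m c ` e \<in> bic_edges m R S T"
proof -
  have shifted: "p + int j + c = p + c + int j" for p j
    by simp
  show ?thesis
    using assms unfolding bic_edges_iff[of e]
    by (elim disjE exE bexE) (simp_all add: shifted u_edge v_edge uv_edge)
qed

lemma bic_edge_subset_verts: "e \<in> bic_edges m R S T \<Longrightarrow> e \<subseteq> bic_verts m"
  unfolding bic_edges_iff bic_verts_eq by auto

lemma is_cycle_shift:
  assumes "is_cycle (bic_edges m R S T) C" "set C \<subseteq> bic_verts m"
  shows "is_cycle (bic_edges m R S T) (map (shift m c) C)"
  using assms(1) inj_on_subset[OF inj_on_shift assms(2)] shift_edge by (rule is_cycle_map)

text \<open>
  Copy j + 1 is glued to copy j through d-jumps at the shifted edges g1 and g2 alternately.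
\<close>

lemma merge_shifted_copies:
  assumes C: "is_cycle (bic_edges m R S T) C" "set C \<subseteq> bic_verts m" and "0 < n"
    and disjoint: "\<And>j j'. j < n \<Longrightarrow> j' < n \<Longrightarrow> j \<noteq> j' \<Longrightarrow>
      shift m (int j * d) ` set C \<inter> shift m (int j' * d) ` set C = {}"
    and g: "g1 \<in> cycle_edges C" "g2 \<in> cycle_edges C" "g1 \<noteq> g2"
    and link: "\<And>x c. x \<in> g1 \<union> g2 \<Longrightarrow> {shift m c x, shift m (c + d) x} \<in> bic_edges m R S T"
  obtains Y where "is_cycle (bic_edges m R S T) Y" "set Y = (\<Union>j<n. shift m (int j * d) ` set C)"
    "cycle_edges C - {g1, g2} \<subseteq> cycle_edges Y"
proof -
  obtain n' where n: "n = Suc n'"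
    using \<open>0 < n\<close> gr0_implies_Suc by blast
  define X where "X j = map (shift m (int j * d)) C" for j
  define h where "h j = (if even j then g1 else g2)" for j :: nat
  define P where "P j = shift m (int j * d) ` h j" for j
  define Q where "Q j = shift m (int (Suc j) * d) ` h j" for j
  have h: "h j \<in> cycle_edges C" "h j \<subseteq> g1 \<union> g2" for j
    using g by (auto simp: h_def)
  have h_sub: "h j \<subseteq> set C" "h j \<subseteq> bic_verts m" for j
    using cycle_edge_subset[OF h(1)] C(2) by blast+
  have set_X: "set (X j) = shift m (int j * d) ` set C" for j
    by (simp add: X_def)
  have "\<exists>Y. is_cycle (bic_edges m R S T) Y \<and> set Y = (\<Union>j\<le>n'. set (X j)) \<and>
     (\<Union>j\<le>n'. cycle_edges (X j)) - (P ` {..<n'} \<union> Q ` {..<n'}) \<subseteq> cycle_edges Y"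
  proof (rule is_cycle_merge_chain)
    show "is_cycle (bic_edges m R S T) (X j)" for j
      unfolding X_def using C by (rule is_cycle_shift)
    show "set (X j) \<inter> set (X j') = {}" if "j \<le> n'" "j' \<le> n'" "j \<noteq> j'" for j j'
      unfolding set_X using disjoint that n by simp
    show "P j \<in> cycle_edges (X j) \<and> Q j \<in> cycle_edges (X (Suc j))" for j
      unfolding P_def Q_def X_def cycle_edges_map using h(1) by blast
    show "\<exists>x y x' y'. P j = {x, y} \<and> Q j = {x', y'} \<and>
        {x, x'} \<in> bic_edges m R S T \<and> {y, y'} \<in> bic_edges m R S T" for j
    proof -
      obtain s t where st: "h j = {s, t}"
        using cycle_edge_doubleton[OF h(1)] by blast
      have "s \<in> g1 \<union> g2" "t \<in> g1 \<union> g2"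
        using h(2)[of j] st by auto
      then have "{shift m (int j * d) s, shift m (int j * d + d) s} \<in> bic_edges m R S T"
        "{shift m (int j * d) t, shift m (int j * d + d) t} \<in> bic_edges m R S T"
        using link by blast+
      moreover have "int (Suc j) * d = int j * d + d"
        by (simp add: algebra_simps)
      then have "P j = {shift m (int j * d) s, shift m (int j * d) t}"
        "Q j = {shift m (int j * d + d) s, shift m (int j * d + d) t}"
        unfolding P_def Q_def st by simp_all
      ultimately show ?thesis
        by blast
    qed
    show "P (Suc j) \<noteq> Q j" for j
    proof -
      have "h (Suc j) \<noteq> h j"
        using g(3) by (simp add: h_def)
      then show ?thesis
        unfolding P_def Q_def by (simp add: inj_on_image_eq_iff[OF inj_on_shift h_sub(2) h_sub(2)])
    qed
  qed
  then obtain Y where Y: "is_cycle (bic_edges m R S T) Y" "set Y = (\<Union>j\<le>n'. set (X j))"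
    "(\<Union>j\<le>n'. cycle_edges (X j)) - (P ` {..<n'} \<union> Q ` {..<n'}) \<subseteq> cycle_edges Y"
    by blast
  have "X 0 = C"
    unfolding X_def using C(2) shift_0 by (auto intro: map_idI)
  have "P 0 = g1"
  proof -
    have "shift m 0 ` g1 = id ` g1"
      using h_sub(2)[of 0] shift_0 by (intro image_cong) (auto simp: h_def)
    then show ?thesis
      by (simp add: P_def h_def)
  qed
  have disjoint_C: "set C \<inter> set (X j) = {}" if "0 < j" "j \<le> n'" for j
    using disjoint[of 0 j] that n \<open>X 0 = C\<close> set_X[of 0] set_X[of j] by simp
  have kept: "e \<in> cycle_edges Y" if e: "e \<in> cycle_edges C" "e \<noteq> g1" "e \<noteq> g2" for e
  proof -
    have e_C: "e \<noteq> {}" "e \<subseteq> set C"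
      using cycle_edge_doubleton[OF e(1)] cycle_edge_subset[OF e(1)] by auto
    have P_X: "P j \<subseteq> set (X j)" and Q_X: "Q j \<subseteq> set (X (Suc j))" for j
      unfolding P_def Q_def set_X using h_sub(1) by auto
    have "e \<noteq> P j" if "j < n'" for j
    proof (cases "j = 0")
      case True
      then show ?thesis using e(2) \<open>P 0 = g1\<close> by simp
    next
      case False
      then have "set C \<inter> set (X j) = {}"
        using disjoint_C[of j] that by simp
      then show ?thesis
        using P_X[of j] e_C by auto
    qed
    moreover have "e \<noteq> Q j" if "j < n'" for j
    proof -
      have "set C \<inter> set (X (Suc j)) = {}"
        using disjoint_C[of "Suc j"] that by simp
      then show ?thesis
        using Q_X[of j] e_C by auto
    qed
    ultimately have "e \<notin> P ` {..<n'} \<union> Q ` {..<n'}"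
      by blast
    then show ?thesis
      using Y(3) e(1) \<open>X 0 = C\<close> by blast
  qed
  show ?thesis
  proof (rule that[OF Y(1)])
    show "set Y = (\<Union>j<n. shift m (int j * d) ` set C)"
      unfolding Y(2) set_X n by (simp add: lessThan_Suc_atMost)
    show "cycle_edges C - {g1, g2} \<subseteq> cycle_edges Y"
      using kept by blast
  qed
qed

end

section \<open>The components of H\<close>

lemma res_add_zneg:
  assumes "c < m"
  shows "res m (p + int (zneg m c)) = res m (p - int c)"
proof -
  have "int (zneg m c) = (int m - int c) mod int m"
    unfolding zneg_def using assms by (simp add: zmod_int of_nat_diff)
  then show ?thesis
    unfolding res_def by (simp add: mod_add_right_eq)
qed

locale bicirculant_removal = bicirculant +
  fixes R S T :: "nat set" and a b :: nat
  assumes a_in_R: "a \<in> R" and b_in_T: "b \<in> T" and a_less: "a < m" and b_less: "b < m"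
    and zero_in_S: "0 \<in> S"
begin

abbreviation "V \<equiv> bic_verts m"
abbreviation "EG \<equiv> bic_edges m R S T"
abbreviation "EH \<equiv> bic_edges m (R - {a, zneg m a}) S (T - {b, zneg m b})"

lemma EG_cases:
  assumes "e \<in> EG"
  obtains "e \<in> EH" | p where "e = {u p, u (p + int a)}" | p where "e = {v p, v (p + int b)}"
proof -
  from assms consider (outer) p j where "j \<in> R" "e = {u p, u (p + int j)}"
    | (inner) p j where "j \<in> T" "e = {v p, v (p + int j)}"
    | (spoke) p j where "j \<in> S" "e = {u p, v (p + int j)}"
    unfolding bic_edges_iff by blast
  then show ?thesis
  proof cases
    case outer
    consider "j = a" | "j = zneg m a" | "j \<in> R - {a, zneg m a}"
      using outer(1) by blast
    then show ?thesis
    proof cases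
      case 1
      then show ?thesis using outer that(2) by blast
    next
      case 2
      then have "e = {u (p - int a), u (p - int a + int a)}"
        using outer res_add_zneg[OF a_less] by (simp add: insert_commute)
      then show ?thesis using that(2) by blast
    next
      case 3
      then show ?thesis by (intro that(1)) (simp add: outer(2) u_edge)
    qed
  next
    case inner
    consider "j = b" | "j = zneg m b" | "j \<in> T - {b, zneg m b}"
      using inner(1) by blast
    then show ?thesis
    proof cases
      case 1
      then show ?thesis using inner that(3) by blast
    next
      case 2
      then have "e = {v (p - int b), v (p - int b + int b)}"
        using inner res_add_zneg[OF b_less] by (simp add: insert_commute)
      then show ?thesis using that(3) by blast
    next
      case 3
      then show ?thesis by (intro that(1)) (simp add: inner(2) v_edge)
    qed
  next
    case spoke
    then show ?thesis by (intro that(1)) (simp add: uv_edge)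
  qed
qed

text \<open>Since u p and v p both lie in K p, the components of H are exactly the sets K p.\<close>

definition K :: "int \<Rightarrow> (nat + nat) set" where
  "K p = component V EH (u p)"

lemma K_subset: "K p \<subseteq> V"
  unfolding K_def by (rule component_subset)

lemma u_in_K: "u p \<in> K p"
  unfolding K_def by (rule component_self) (simp add: bic_verts_eq)

lemma v_in_K: "v p \<in> K p"
proof -
  have "{u p, v p} \<in> EH"
    using uv_edge[OF zero_in_S, of p] by simp
  moreover have "v p \<in> V"
    by (simp add: bic_verts_eq)
  ultimately show ?thesis
    using component_step u_in_K[of p] unfolding K_def by metis
qed

lemma K_eq_if_mem: "x \<in> K p \<Longrightarrow> x \<in> K q \<Longrightarrow> K p = K q"
  unfolding K_def by (rule component_eq_if_mem)

lemma K_disjoint: "K p \<noteq> K q \<Longrightarrow> K p \<inter> K q = {}"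
  using K_eq_if_mem by blast

lemma shift_K_subset: "shift m c ` K p \<subseteq> K (p + c)"
  unfolding K_def using component_image[of V "shift m c" EH "u p"] shift_in_verts shift_edge by simp

lemma shift_K: "shift m c ` K p = K (p + c)"
proof
  show "K (p + c) \<subseteq> shift m c ` K p"
  proof
    fix x assume x: "x \<in> K (p + c)"
    then have "shift m (- c) x \<in> K p"
      using shift_K_subset[of "- c" "p + c"] by auto
    moreover have "x = shift m c (shift m (- c) x)"
      using x K_subset by (simp add: shift_shift shift_0 subset_iff)
    ultimately show "x \<in> shift m c ` K p"
      by blast
  qed
qed (rule shift_K_subset)

lemma K_shift_eq: "K p = K q \<Longrightarrow> K (p + c) = K (q + c)"
  using shift_K[of c p] shift_K[of c q] by simp

lemma K_balanced: "card {x \<in> K p. isl x} = card {x \<in> K p. \<not> isl x}"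
proof -
  define swap :: "nat + nat \<Rightarrow> nat + nat" where "swap = case_sum Inr Inl"
  have "swap x \<in> K p" if "x \<in> K p" for x
  proof -
    obtain q where "x = u q \<or> x = v q"
      using \<open>x \<in> K p\<close> K_subset by (metis bic_verts_cases subsetD)
    then have "K q = K p"
      using that u_in_K[of q] v_in_K[of q] K_eq_if_mem by metis
    then have "u q \<in> K p" "v q \<in> K p"
      using u_in_K[of q] v_in_K[of q] by simp_all
    moreover have "swap x = u q \<or> swap x = v q"
      using \<open>x = u q \<or> x = v q\<close> by (auto simp: swap_def)
    ultimately show ?thesis
      by metis
  qed
  then have "bij_betw swap {x \<in> K p. isl x} {x \<in> K p. \<not> isl x}"
    by (intro bij_betw_byWitness[where f' = swap]) (auto simp: swap_def split: sum.splits)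
  then show ?thesis
    by (rule bij_betw_same_card)
qed

definition is_period :: "int \<Rightarrow> bool" where
  "is_period c \<longleftrightarrow> K c = K 0"

lemma K_eq_iff_period: "K p = K q \<longleftrightarrow> is_period (q - p)"
proof
  assume "K p = K q"
  then have "K (p + - p) = K (q + - p)"
    by (rule K_shift_eq)
  then show "is_period (q - p)"
    by (simp add: is_period_def)
next
  assume "is_period (q - p)"
  then have "K (q - p + p) = K (0 + p)"
    unfolding is_period_def by (rule K_shift_eq)
  then show "K p = K q"
    by simp
qed

lemma is_period_add: "is_period c \<Longrightarrow> is_period c' \<Longrightarrow> is_period (c + c')"
  using K_eq_iff_period[of c "c + c'"] by (simp add: is_period_def)

lemma is_period_uminus: "is_period c \<Longrightarrow> is_period (- c)"
  using K_eq_iff_period[of c 0] by (simp add: is_period_def)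

lemma is_period_modulus: "is_period (int m)"
  using res_add_modulus[of m 0] by (simp add: is_period_def K_def)

lemma is_period_mult: "is_period c \<Longrightarrow> is_period (k * c)"
proof (induction k rule: int_induct[where k = 0])
  case base
  then show ?case by (simp add: is_period_def)
next
  case (step1 i)
  then show ?case by (simp add: distrib_right is_period_add)
next
  case (step2 i)
  then have "is_period (i * c + - c)"
    by (intro is_period_add is_period_uminus)
  moreover have "i * c + - c = (i - 1) * c"
    by (simp add: algebra_simps)
  ultimately show ?case
    by metis
qed

definition a_order :: nat where
  "a_order = (LEAST k. 0 < k \<and> is_period (int k * int a))"

definition b_order :: nat where
  "b_order = (LEAST l. 0 < l \<and> (\<exists>j. is_period (int l * int b - j * int a)))"

lemma a_order: "0 < a_order" "is_period (int a_order * int a)"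
proof -
  have "\<exists>k. 0 < k \<and> is_period (int k * int a)"
    using m_pos is_period_mult[OF is_period_modulus, of "int a"] by (auto simp: mult.commute)
  then have "0 < a_order \<and> is_period (int a_order * int a)"
    unfolding a_order_def by (rule LeastI_ex)
  then show "0 < a_order" "is_period (int a_order * int a)"
    by simp_all
qed

lemma a_order_least: "0 < k \<Longrightarrow> k < a_order \<Longrightarrow> \<not> is_period (int k * int a)"
  unfolding a_order_def using not_less_Least by blast

lemma b_order: "0 < b_order" "\<exists>j. is_period (int b_order * int b - j * int a)"
proof -
  have "is_period (int m * int b - 0 * int a)"
    using is_period_mult[OF is_period_modulus, of "int b"] by (simp add: mult.commute)
  then have "\<exists>l. 0 < l \<and> (\<exists>j. is_period (int l * int b - j * int a))"
    using m_pos by blast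
  then have "0 < b_order \<and> (\<exists>j. is_period (int b_order * int b - j * int a))"
    unfolding b_order_def by (rule LeastI_ex)
  then show "0 < b_order" "\<exists>j. is_period (int b_order * int b - j * int a)"
    by simp_all
qed

lemma b_order_least: "0 < l \<Longrightarrow> l < b_order \<Longrightarrow> \<not> is_period (int l * int b - j * int a)"
  unfolding b_order_def using not_less_Least by blast

lemma period_lattice_eq_0:
  assumes "\<bar>i\<bar> < int b_order" "\<bar>j\<bar> < int a_order" "is_period (i * int b + j * int a)"
  shows "i = 0 \<and> j = 0"
proof -
  have "i = 0"
  proof (rule ccontr)
    assume "i \<noteq> 0"
    moreover have "is_period (\<bar>i\<bar> * int b - (- sgn i * j) * int a)"
      using assms(3) is_period_uminus[OF assms(3)] \<open>i \<noteq> 0\<close>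
      by (cases "0 < i") (simp_all add: algebra_simps)
    ultimately show False
      using b_order_least[of "nat \<bar>i\<bar>" "- sgn i * j"] assms(1) by (simp add: nat_less_iff)
  qed
  moreover have "j = 0"
  proof (rule ccontr)
    assume "j \<noteq> 0"
    moreover have "is_period (\<bar>j\<bar> * int a)"
      using assms(3) is_period_uminus[OF assms(3)] \<open>i = 0\<close> by (cases "0 < j") simp_all
    ultimately show False
      using a_order_least[of "nat \<bar>j\<bar>"] assms(2) by (simp add: nat_less_iff)
  qed
  ultimately show ?thesis ..
qed

lemma K_lattice_inj:
  assumes "i < b_order" "i' < b_order" "j < a_order" "j' < a_order"
    and "K (int i * int b + int j * int a) = K (int i' * int b + int j' * int a)"
  shows "i = i' \<and> j = j'"
proof -
  have "is_period ((int i' - int i) * int b + (int j' - int j) * int a)"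
    using assms(5) by (simp add: K_eq_iff_period algebra_simps)
  then have "int i' - int i = 0 \<and> int j' - int j = 0"
    using assms(1-4) by (intro period_lattice_eq_0) auto
  then show ?thesis
    by simp
qed

lemma K_lattice_reduce:
  "\<exists>i<b_order. \<exists>j<a_order. K (x * int b + y * int a) = K (int i * int b + int j * int a)"
proof -
  obtain j0 where j0: "is_period (int b_order * int b - j0 * int a)"
    using b_order(2) by blast
  define q where "q = x div int b_order"
  define r where "r = (y + q * j0) div int a_order"
  define i where "i = x mod int b_order"
  define j where "j = (y + q * j0) mod int a_order"
  have i_eq: "i = x - q * int b_order" and j_eq: "j = y + q * j0 - r * int a_order"
    unfolding i_def j_def q_def r_def by (simp_all add: minus_div_mult_eq_mod)
  have "(i * int b + j * int a) - (x * int b + y * int a) =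
      (- q) * (int b_order * int b - j0 * int a) + (- r) * (int a_order * int a)"
    unfolding i_eq j_eq by (simp add: algebra_simps)
  then have "is_period ((i * int b + j * int a) - (x * int b + y * int a))"
    using is_period_add is_period_mult[OF j0] is_period_mult[OF a_order(2)] by presburger
  moreover have "0 \<le> i" "i < int b_order" "0 \<le> j" "j < int a_order"
    using a_order(1) b_order(1) by (simp_all add: i_def j_def)
  ultimately have "nat i < b_order" "nat j < a_order"
    "K (x * int b + y * int a) = K (int (nat i) * int b + int (nat j) * int a)"
    by (simp_all add: K_eq_iff_period nat_less_iff)
  then show ?thesis
    by blast
qed

lemma K_neighbour: "y \<in> K c \<Longrightarrow> y \<in> K q \<Longrightarrow> z \<in> K (q + t) \<Longrightarrow> z \<in> K (c + t)"
  using K_eq_if_mem K_shift_eq by metis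

lemma reachable_in_K_lattice:
  assumes "(adj EG)\<^sup>*\<^sup>* (u 0) x"
  shows "\<exists>i j. x \<in> K (i * int b + j * int a)"
  using assms
proof (induction rule: rtranclp_induct)
  case base
  then show ?case
    using u_in_K[of 0] by (intro exI[of _ 0]) simp
next
  case (step y z)
  then obtain i j where y: "y \<in> K (i * int b + j * int a)"
    by blast
  have "{y, z} \<in> EG"
    using step.hyps(2) by (simp add: adj_def)
  then show ?case
  proof (cases rule: EG_cases)
    case 1
    then have "z \<in> K (i * int b + j * int a)"
      using y bic_edge_subset_verts[OF 1] unfolding K_def by (blast intro: component_step)
    then show ?thesis by blast
  next
    case (2 p)
    then consider "y = u p" "z = u (p + int a)" | "y = u (p + int a)" "z = u (p + int a + - int a)"
      by (auto simp: doubleton_eq_iff)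
    then have "z \<in> K (i * int b + j * int a + int a) \<or> z \<in> K (i * int b + j * int a + - int a)"
      using y u_in_K K_neighbour by cases metis+
    then have "z \<in> K (i * int b + (j + 1) * int a) \<or> z \<in> K (i * int b + (j - 1) * int a)"
      by (simp add: algebra_simps)
    then show ?thesis by blast
  next
    case (3 p)
    then consider "y = v p" "z = v (p + int b)" | "y = v (p + int b)" "z = v (p + int b + - int b)"
      by (auto simp: doubleton_eq_iff)
    then have "z \<in> K (i * int b + j * int a + int b) \<or> z \<in> K (i * int b + j * int a + - int b)"
      using y v_in_K K_neighbour by cases metis+
    then have "z \<in> K ((i + 1) * int b + j * int a) \<or> z \<in> K ((i - 1) * int b + j * int a)"
      by (simp add: algebra_simps)
    then show ?thesis by blast
  qed
qed

lemma verts_eq_Union_K: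
  assumes "graph_connected V EG"
  shows "V = (\<Union>i<b_order. \<Union>j<a_order. K (int i * int b + int j * int a))"
proof
  show "V \<subseteq> (\<Union>i<b_order. \<Union>j<a_order. K (int i * int b + int j * int a))"
  proof
    fix x assume "x \<in> V"
    moreover have "u 0 \<in> V"
      by (simp add: bic_verts_eq)
    ultimately obtain i j where "x \<in> K (i * int b + j * int a)"
      using assms reachable_in_K_lattice unfolding graph_connected_def by blast
    then show "x \<in> (\<Union>i<b_order. \<Union>j<a_order. K (int i * int b + int j * int a))"
      using K_lattice_reduce[of i j] by auto
  qed
qed (use K_subset in blast)

section \<open>Gluing the shifted cycles\<close>

lemma outer_edge_link:
  assumes "outer_edge e" "x \<in> e"
  shows "{shift m c x, shift m (c + int a) x} \<in> EG"
proof -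
  obtain s where "x = Inl s"
    using assms unfolding outer_edge_def by blast
  then show ?thesis
    using u_edge[OF a_in_R, of "int s + c"] by (simp add: shift_def add.assoc)
qed

lemma inner_edge_link:
  assumes "inner_edge e" "x \<in> e"
  shows "{shift m c x, shift m (c + int b) x} \<in> EG"
proof -
  obtain s where "x = Inr s"
    using assms unfolding inner_edge_def by blast
  then show ?thesis
    using v_edge[OF b_in_T, of "int s + c"] by (simp add: shift_def add.assoc)
qed

lemma cycle_through_a_orbit:
  assumes Z: "is_cycle EH Z" "set Z = K 0"
    and e: "e1 \<in> cycle_edges Z" "e2 \<in> cycle_edges Z" "e1 \<noteq> e2" "outer_edge e1" "outer_edge e2"
  obtains Y where "is_cycle EG Y" "set Y = (\<Union>j<a_order. K (int j * int a))"
    "cycle_edges Z - {e1, e2} \<subseteq> cycle_edges Y"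
proof -
  have Z_G: "is_cycle EG Z"
    using Z(1) by (rule is_cycle_mono) (intro bic_edges_mono; blast)
  have Z_V: "set Z \<subseteq> V"
    using Z(2) K_subset by simp
  have disjoint: "shift m (int j * int a) ` set Z \<inter> shift m (int j' * int a) ` set Z = {}"
    if "j < a_order" "j' < a_order" "j \<noteq> j'" for j j'
  proof -
    have "K (int j * int a) \<noteq> K (int j' * int a)"
      using K_lattice_inj[of 0 0 j j'] b_order(1) that by auto
    then show ?thesis
      using Z(2) K_disjoint by (simp add: shift_K)
  qed
  have link: "{shift m c x, shift m (c + int a) x} \<in> EG" if "x \<in> e1 \<union> e2" for x c
    using that e(4,5) outer_edge_link by blast
  obtain Y where "is_cycle EG Y" "set Y = (\<Union>j<a_order. shift m (int j * int a) ` set Z)"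
    "cycle_edges Z - {e1, e2} \<subseteq> cycle_edges Y"
    by (rule merge_shifted_copies[OF Z_G Z_V a_order(1) disjoint e(1-3) link])
  then show ?thesis
    using that Z(2) by (simp add: shift_K)
qed

lemma hamiltonian_from_a_orbit_cycle:
  assumes conn: "graph_connected V EG"
    and Y: "is_cycle EG Y" "set Y = (\<Union>j<a_order. K (int j * int a))"
    and f: "f1 \<in> cycle_edges Y" "f2 \<in> cycle_edges Y" "f1 \<noteq> f2" "inner_edge f1" "inner_edge f2"
  shows "hamiltonian V EG"
proof -
  have shift_Y:
    "shift m (int i * int b) ` set Y = (\<Union>j<a_order. K (int i * int b + int j * int a))" for i
    using Y(2) by (simp add: image_UN shift_K add.commute)
  have Y_V: "set Y \<subseteq> V"
    using Y(2) K_subset by auto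
  have disjoint: "shift m (int i * int b) ` set Y \<inter> shift m (int i' * int b) ` set Y = {}"
    if "i < b_order" "i' < b_order" "i \<noteq> i'" for i i'
    unfolding shift_Y using K_lattice_inj[of i i'] K_disjoint that by blast
  have link: "{shift m c x, shift m (c + int b) x} \<in> EG" if "x \<in> f1 \<union> f2" for x c
    using that f(4,5) inner_edge_link by blast
  obtain H where H: "is_cycle EG H" "set H = (\<Union>i<b_order. shift m (int i * int b) ` set Y)"
    by (rule merge_shifted_copies[OF Y(1) Y_V b_order(1) disjoint f(1-3) link])
  have "(\<Union>i<b_order. shift m (int i * int b) ` set Y) = V"
    unfolding shift_Y using verts_eq_Union_K[OF conn] by simp
  then show ?thesis
    unfolding hamiltonian_def using H by (intro exI[of _ H]) simp
qed

lemma hamiltonian_if_K0_cycle: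
  assumes conn: "graph_connected V EG"
    and Z: "is_cycle EH Z" "set Z = K 0" "2 \<le> card {e \<in> cycle_edges Z. outer_edge e}"
  shows "hamiltonian V EG"
proof -
  obtain e1 e2 where e: "e1 \<in> cycle_edges Z" "e2 \<in> cycle_edges Z" "e1 \<noteq> e2"
    "outer_edge e1" "outer_edge e2"
    using card_ge_2_obtain[OF Z(3)] by blast
  have "2 \<le> card {e \<in> cycle_edges Z. inner_edge e}"
    using Z card_outer_edges_eq_card_inner_edges[OF Z(1)] K_balanced by simp
  then obtain f1 f2 where f: "f1 \<in> cycle_edges Z" "f2 \<in> cycle_edges Z" "f1 \<noteq> f2"
    "inner_edge f1" "inner_edge f2"
    using card_ge_2_obtain by blast
  obtain Y where Y: "is_cycle EG Y" "set Y = (\<Union>j<a_order. K (int j * int a))"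
    "cycle_edges Z - {e1, e2} \<subseteq> cycle_edges Y"
    using cycle_through_a_orbit[OF Z(1,2) e] .
  have "f1 \<in> cycle_edges Y" "f2 \<in> cycle_edges Y"
    using f e Y(3) outer_edge_not_inner_edge by blast+
  then show ?thesis
    using hamiltonian_from_a_orbit_cycle[OF conn Y(1,2)] f(3-5) by blast
qed

end

theorem lemma3p4:
  fixes m a b :: nat and R S T :: "nat set"
  assumes "is_bicirculant_data m R S T"
    and "graph_connected (bic_verts m) (bic_edges m R S T)"
    and "card R + card S \<ge> 4"
    and "card R \<ge> 3" and "card T \<ge> 3"
    and "a \<in> R" and "b \<in> T" and "2 * a \<noteq> m" and "2 * b \<noteq> m"
    and "\<forall>x \<in> bic_verts m.
           \<exists>vs. is_cycle (bic_edges m (R - {a, zneg m a}) S (T - {b, zneg m b})) vs \<and>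
                set vs = component (bic_verts m) (bic_edges m (R - {a, zneg m a}) S (T - {b, zneg m b})) x \<and>
                card {e \<in> cycle_edges vs. outer_edge e} \<ge> 2"
  shows "hamiltonian (bic_verts m) (bic_edges m R S T)"
proof -
  from assms(1) have m: "0 < m" and sub: "R \<subseteq> {..<m}" "T \<subseteq> {..<m}" and "0 \<in> S"
    unfolding is_bicirculant_data_def by auto
  interpret bicirculant_removal m R S T a b
    using m sub assms(6,7) \<open>0 \<in> S\<close> by unfold_locales auto
  have "Inl 0 \<in> V"
    using m by (simp add: bic_verts_def)
  then obtain Z where "is_cycle EH Z" "set Z = component V EH (Inl 0)"
    "2 \<le> card {e \<in> cycle_edges Z. outer_edge e}"
    using assms(10) by blast
  moreover have "component V EH (Inl 0) = K 0"
    by (simp add: K_def res_def)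
  ultimately show ?thesis
    using hamiltonian_if_K0_cycle[OF assms(2)] by simp
qed

end
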